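(* Let $k\ge 1$ and let $S_1,\dots,S_k\subset\mathbb{C}$ be pairwise disjoint bounded convex sets with $\operatorname{diam}(S_i)\le 1$ for all $i$ and $\operatorname{dist}(S_i,S_j)\ge 5k$ for all $i\ne j$. For each $n\ge 1$ let $P_n(z)=\prod_{j=1}^{k}\prod_{i=1}^{n}(z-z_i^{(j)})$, where $z_i^{(j)}\in S_j$ for all $j=1,\dots,k$ and $i=1,\dots,n$ (the points may depend on $n$). Then for every $\epsilon>\frac{3-\sqrt5}{2}$ there is a constant $c(k,\epsilon)$, independent of $n$ and of the choice of the points, such that for every $n\ge1$ and every $i\in\{1,\dots,k\}$ the number of zeros of $P_n'$ (counted with multiplicity) in $S_i^{\epsilon}$ is at least $n-c(k,\epsilon)$.
   Context: For a set $S\subset\mathbb{C}$ and $\epsilon>0$, $S^{\epsilon}=\{z\in\mathbb{C}:\operatorname{dist}(z,S)<\epsilon\}$ denotes the $\epsilon$-neighbourhood of $S$. *)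

theory Defs
  imports "HOL-Analysis.Analysis" "HOL-Computational_Algebra.Polynomial"
begin

definition eps_nbhd :: "complex set \<Rightarrow> real \<Rightarrow> complex set" where
  "eps_nbhd S e = {w. infdist w S < e}"

definition zeros_in :: "complex poly \<Rightarrow> complex set \<Rightarrow> nat" where
  "zeros_in p A = (\<Sum>x\<in>{x\<in>A. poly p x = 0}. order x p)"

text \<open>P_n(z) = prod_j prod_i (z - z_i^(j)), indices 0-based: j < k, i < n.\<close>
definition Pn :: "nat \<Rightarrow> nat \<Rightarrow> (nat \<Rightarrow> nat \<Rightarrow> complex) \<Rightarrow> complex poly" where
  "Pn k n z = (\<Prod>j<k. \<Prod>i<n. [:- z j i, 1:])"

end

theory Submission
  imports Defs "HOL-Complex_Analysis.Complex_Analysis"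
    "HOL-Computational_Algebra.Fundamental_Theorem_Algebra"
begin

text \<open>Fix a cluster S = S i and a root c in it, and write P = Q R where Q collects the n roots
  in S. At distance d from S the terms of Q'/Q = (\<Sum>w. 1 / (x - w)) lie in a common
  half-plane because S is convex, so |Q'/Q| \<ge> n d / (d + 1)^2, and this exceeds n/5 exactly
  when (3 - sqrt 5)/2 < d < (3 + sqrt 5)/2. The (k - 1) n roots of R stay at distance at least
  5k - 2 from the disc of radius 2 about c, so |R'/R| \<le> (k - 1) n / (5k - 2) \<le> n/5 there.
  Hence Q'R dominates QR' on the circle |x - c| = 2, and by Rouche's theorem P' = Q'R + QR' has
  as many zeros in the disc as Q'R, namely the n - 1 zeros of Q' (Gauss-Lucas). Each of them is
  within (3 - sqrt 5)/2 < \<epsilon> of S, since farther out the dominance still holds inside the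
  disc; so c(k, \<epsilon>) = 1 works.\<close>

lemma poly_pderiv_prod_linear:
  fixes w :: "'a \<Rightarrow> complex"
  assumes "finite A" "\<forall>a\<in>A. x \<noteq> w a"
  shows "poly (pderiv (\<Prod>a\<in>A. [:- w a, 1:])) x
           = poly (\<Prod>a\<in>A. [:- w a, 1:]) x * (\<Sum>a\<in>A. 1 / (x - w a))"
  using assms
proof (induction A rule: finite_induct)
  case (insert a A)
  define P where "P = (\<Prod>a\<in>A. [:- w a, 1:])"
  have "x - w a \<noteq> 0" using insert.prems by simp
  have "poly (pderiv ([:- w a, 1:] * P)) x = poly P x + (x - w a) * poly (pderiv P) x"
    unfolding pderiv_mult by (simp add: pderiv_pCons algebra_simps)
  also have "\<dots> = (x - w a) * poly P x * (1 / (x - w a) + (\<Sum>a\<in>A. 1 / (x - w a)))"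
    using insert \<open>x - w a \<noteq> 0\<close> by (simp add: P_def field_simps)
  finally show ?case
    using insert by (simp add: P_def algebra_simps)
qed simp

lemma norm_poly_pderiv_prod_linear_le:
  fixes w :: "'a \<Rightarrow> complex"
  assumes "finite A" "\<delta> > 0" "\<forall>a\<in>A. \<delta> \<le> dist x (w a)"
  shows "cmod (poly (pderiv (\<Prod>a\<in>A. [:- w a, 1:])) x)
           \<le> real (card A) / \<delta> * cmod (poly (\<Prod>a\<in>A. [:- w a, 1:]) x)"
proof -
  have "x \<noteq> w a" if "a \<in> A" for a
    using assms that by fastforce
  then have "cmod (poly (pderiv (\<Prod>a\<in>A. [:- w a, 1:])) x)
      = cmod (poly (\<Prod>a\<in>A. [:- w a, 1:]) x) * cmod (\<Sum>a\<in>A. 1 / (x - w a))"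
    by (simp add: poly_pderiv_prod_linear assms(1) norm_mult)
  also have "\<dots> \<le> cmod (poly (\<Prod>a\<in>A. [:- w a, 1:]) x) * (\<Sum>a\<in>A. 1 / \<delta>)"
  proof (intro mult_left_mono sum_norm_le)
    fix a assume "a \<in> A"
    then show "cmod (1 / (x - w a)) \<le> 1 / \<delta>"
      using assms by (simp add: norm_divide dist_norm frac_le)
  qed simp
  finally show ?thesis
    by (simp add: mult.commute)
qed

text \<open>With p the point of closure S nearest to x and v = x - p, every w in S has
  Re (v / (x - w)) \<ge> d^2 / (d + D)^2: the angle at p between x and w is obtuse, so x - w
  has component at least d along v, and its length is at most d + D.\<close>
lemma norm_sum_inverse_ge_convex:
  fixes S :: "complex set" and w :: "'a \<Rightarrow> complex"
  assumes "convex S" "bounded S" "diameter S \<le> D" "finite A"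
    and "\<forall>a\<in>A. w a \<in> S" and "infdist x S > 0"
  shows "real (card A) * (infdist x S / (infdist x S + D)^2) \<le> cmod (\<Sum>a\<in>A. 1 / (x - w a))"
proof -
  define d where "d = infdist x S"
  have "S \<noteq> {}" using assms(6) by (auto simp: infdist_def)
  define C where "C = closure S"
  have C: "closed C" "convex C" "C \<noteq> {}" "bounded C"
    using assms(1,2) \<open>S \<noteq> {}\<close> by (auto simp: C_def convex_closure)
  define p where "p = closest_point C x"
  have "p \<in> C" using C by (simp add: p_def closest_point_in_set)
  define v where "v = x - p"
  have norm_v: "cmod v = d"
    using setdist_closest_point[OF C(1,3), of x]
    by (simp add: d_def infdist_eq_setdist C_def p_def v_def dist_norm)
  have "d > 0" using assms(6) by (simp add: d_def)
  have term_ge: "d^2 / (d + D)^2 \<le> Re (v / (x - w a))" if "a \<in> A" for a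
  proof -
    define u where "u = x - w a"
    have "w a \<in> C" using assms(5) that by (auto simp: C_def intro: closure_subset[THEN subsetD])
    have obtuse: "inner (x - p) (w a - p) \<le> 0"
      using closest_point_dot[OF C(2,1) \<open>w a \<in> C\<close>, of x] by (simp add: p_def)
    have "dist p (w a) \<le> D"
      using diameter_bounded_bound[OF C(4) \<open>p \<in> C\<close> \<open>w a \<in> C\<close>] assms(2,3)
      by (simp add: C_def diameter_closure)
    then have norm_u: "cmod u \<le> d + D"
      using norm_triangle_ineq[of v "p - w a"] norm_v by (simp add: u_def v_def dist_norm)
    have "inner u v = inner v v - inner (w a - p) v"
      by (simp add: u_def v_def inner_diff_left algebra_simps)
    then have inner_uv: "d^2 \<le> inner u v"
      using obtuse norm_v by (simp add: power2_norm_eq_inner[symmetric] v_def inner_commute)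
    then have "cmod u > 0" using \<open>d > 0\<close> by auto
    have "d^2 / (d + D)^2 \<le> d^2 / (cmod u)^2"
      using norm_u \<open>cmod u > 0\<close> \<open>d > 0\<close> by (intro frac_le power_mono) auto
    also have "\<dots> \<le> inner u v / (cmod u)^2"
      using inner_uv by (simp add: divide_right_mono)
    also have "\<dots> = Re (v / u)"
      by (simp add: Re_divide inner_complex_def cmod_power2 algebra_simps)
    finally show ?thesis by (simp add: u_def)
  qed
  have "real (card A) * (d^2 / (d + D)^2) \<le> (\<Sum>a\<in>A. Re (v / (x - w a)))"
    using sum_mono[of A "\<lambda>_. d^2 / (d + D)^2"] term_ge by simp
  also have "\<dots> = Re (v * (\<Sum>a\<in>A. 1 / (x - w a)))"
    by (simp add: sum_distrib_left)
  also have "\<dots> \<le> cmod (v * (\<Sum>a\<in>A. 1 / (x - w a)))"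
    by (rule complex_Re_le_cmod)
  also have "\<dots> = d * cmod (\<Sum>a\<in>A. 1 / (x - w a))"
    by (simp add: norm_mult norm_v)
  finally have "d * (real (card A) * (d / (d + D)^2)) \<le> d * cmod (\<Sum>a\<in>A. 1 / (x - w a))"
    by (simp add: power2_eq_square algebra_simps)
  then have "real (card A) * (d / (d + D)^2) \<le> cmod (\<Sum>a\<in>A. 1 / (x - w a))"
    using \<open>d > 0\<close> by (rule mult_left_le_imp_le)
  then show ?thesis
    by (simp add: d_def)
qed

lemma Gauss_Lucas_infdist:
  fixes S :: "complex set" and w :: "'a \<Rightarrow> complex"
  assumes "convex S" "bounded S" "finite A" "A \<noteq> {}" "\<forall>a\<in>A. w a \<in> S"
    and "poly (pderiv (\<Prod>a\<in>A. [:- w a, 1:])) x = 0"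
  shows "infdist x S = 0"
proof (rule ccontr)
  assume "infdist x S \<noteq> 0"
  then have pos: "infdist x S > 0" using infdist_nonneg[of x S] by linarith
  then have "\<forall>a\<in>A. x \<noteq> w a" using assms(5) by auto
  then have "poly (\<Prod>a\<in>A. [:- w a, 1:]) x \<noteq> 0" using assms(3) by (simp add: poly_prod)
  moreover have "0 < real (card A) * (infdist x S / (infdist x S + diameter S)^2)"
    using assms(3,4) pos diameter_ge_0[OF assms(2)] by (simp add: card_gt_0_iff)
  then have "(\<Sum>a\<in>A. 1 / (x - w a)) \<noteq> 0"
    using norm_sum_inverse_ge_convex[OF assms(1,2) order_refl assms(3,5) pos] by auto
  ultimately show False
    using assms(6) poly_pderiv_prod_linear[OF assms(3) \<open>\<forall>a\<in>A. x \<noteq> w a\<close>]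
    by simp
qed

lemma dist_le_infdist_plus_diameter:
  fixes S :: "'a::metric_space set"
  assumes "c \<in> S" "bounded S"
  shows "dist x c \<le> infdist x S + diameter S"
proof -
  have "dist x c - diameter S \<le> dist x s" if "s \<in> S" for s
    using dist_triangle[of x c s] diameter_bounded_bound[OF assms(2) that assms(1)] by linarith
  then have "dist x c - diameter S \<le> (INF s\<in>S. dist x s)"
    using assms(1) by (intro cINF_greatest) auto
  also have "\<dots> = infdist x S"
    using assms(1) by (metis empty_iff infdist_notempty)
  finally show ?thesis by simp
qed

lemma add_one_squared_less_five_times:
  fixes d :: real
  assumes "(3 - sqrt 5) / 2 < d" "d < (3 + sqrt 5) / 2"
  shows "(d + 1)^2 < 5 * d"
proof -
  have "(d - (3 - sqrt 5) / 2) * (d - (3 + sqrt 5) / 2) < 0"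
    using assms by (intro mult_pos_neg) auto
  moreover have "(d - (3 - sqrt 5) / 2) * (d - (3 + sqrt 5) / 2) = (d + 1)^2 - 5 * d"
    by (simp add: algebra_simps power2_eq_square add_divide_distrib[symmetric])
  ultimately show ?thesis by simp
qed

lemma zorder_poly:
  assumes "(p :: complex poly) \<noteq> 0"
  shows "zorder (poly p) a = int (order a p)"
proof -
  obtain q where q: "p = [:-a, 1:] ^ order a p * q" "\<not> [:-a, 1:] dvd q"
    using order_decomp[OF assms] by blast
  show ?thesis
  proof (rule zorder_eqI[of UNIV a "poly q"])
    show "poly q a \<noteq> 0" using q(2) by (simp add: poly_eq_0_iff_dvd)
    fix w show "poly p w = poly q w * (w - a) powi int (order a p)"
      by (subst q(1)) (simp add: power_int_of_nat)
  qed (auto intro: holomorphic_intros)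
qed

lemma zeros_in_eq_degree:
  assumes "p \<noteq> 0" "{x. poly p x = 0} \<subseteq> A"
  shows "zeros_in p A = degree p"
proof -
  have "zeros_in p A = (\<Sum>x\<in>set_mset (proots p). count (proots p) x)"
    unfolding zeros_in_def using assms by (intro sum.cong) auto
  also have "\<dots> = degree p"
    by (simp add: size_multiset_overloaded_eq[symmetric] size_proots_complex)
  finally show ?thesis .
qed

lemma zeros_in_mult_nonvanishing:
  assumes "\<forall>x\<in>A. poly q x \<noteq> 0"
  shows "zeros_in (p * q) A = zeros_in p A"
proof (cases "p = 0 \<or> A = {}")
  case False
  then have "p * q \<noteq> 0" using assms by auto
  then show ?thesis
    unfolding zeros_in_def using assms by (intro sum.cong) (auto simp: order_mult order_root)
qed (auto simp: zeros_in_def)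

lemma zeros_in_mono:
  assumes "p \<noteq> 0" "\<forall>x\<in>A. poly p x = 0 \<longrightarrow> x \<in> B"
  shows "zeros_in p A \<le> zeros_in p B"
proof -
  have "zeros_in p A = (\<Sum>x\<in>{x\<in>A \<inter> B. poly p x = 0}. order x p)"
    unfolding zeros_in_def using assms(2) by (intro sum.cong) auto
  also have "\<dots> \<le> zeros_in p B"
    unfolding zeros_in_def using poly_roots_finite[OF assms(1)]
    by (intro sum_mono2) (auto elim: rev_finite_subset)
  finally show ?thesis .
qed

lemma zeros_in_pderiv_prod_linear_ball:
  fixes S :: "complex set" and w :: "'a \<Rightarrow> complex"
  assumes "convex S" "bounded S" "c \<in> S" "diameter S < r"
    and "finite A" "A \<noteq> {}" "\<forall>a\<in>A. w a \<in> S"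
  shows "zeros_in (pderiv (\<Prod>a\<in>A. [:- w a, 1:])) (ball c r) = card A - 1"
proof -
  define Q where "Q = (\<Prod>a\<in>A. [:- w a, 1:])"
  have "degree Q = card A"
    unfolding Q_def by (subst degree_prod_eq_sum_degree) auto
  then have "pderiv Q \<noteq> 0" "degree (pderiv Q) = card A - 1"
    using assms(5,6) by (auto simp: pderiv_eq_0_iff degree_pderiv card_gt_0_iff)
  moreover have "{x. poly (pderiv Q) x = 0} \<subseteq> ball c r"
  proof
    fix x assume "x \<in> {x. poly (pderiv Q) x = 0}"
    then show "x \<in> ball c r"
      using Gauss_Lucas_infdist[OF assms(1,2,5,6,7), of x] assms(4)
        dist_le_infdist_plus_diameter[OF assms(3,2), of x]
      by (simp add: Q_def dist_commute)
  qed
  ultimately have "zeros_in (pderiv Q) (ball c r) = card A - 1"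
    by (simp add: zeros_in_eq_degree)
  then show ?thesis by (simp add: Q_def)
qed

lemma sum_winding_number_zorder_circlepath_poly:
  assumes "p \<noteq> 0" "r > 0" "\<forall>x. dist c x = r \<longrightarrow> poly p x \<noteq> 0"
  shows "(\<Sum>x\<in>{x. poly p x = 0}. winding_number (circlepath c r) x * of_int (zorder (poly p) x))
           = of_nat (zeros_in p (ball c r))"
proof -
  have "(\<Sum>x\<in>{x. poly p x = 0}. winding_number (circlepath c r) x * of_int (zorder (poly p) x))
      = (\<Sum>x\<in>{x. poly p x = 0}. if x \<in> ball c r then of_nat (order x p) else 0)"
  proof (rule sum.cong)
    fix x assume "x \<in> {x. poly p x = 0}"
    then have "dist c x \<noteq> r" using assms(3) by auto
    show "winding_number (circlepath c r) x * of_int (zorder (poly p) x)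
        = (if x \<in> ball c r then of_nat (order x p) else 0)"
    proof (cases "x \<in> ball c r")
      case True
      then have "cmod (x - c) < r" by (simp add: dist_norm norm_minus_commute)
      then show ?thesis
        using True winding_number_circlepath zorder_poly[OF assms(1)] by simp
    next
      case False
      with \<open>dist c x \<noteq> r\<close> have "x \<notin> cball c r" by simp
      then have "winding_number (circlepath c r) x = 0"
        using assms(2) by (intro winding_number_zero_outside[of _ "cball c r"]) auto
      with False show ?thesis by simp
    qed
  qed simp
  also have "\<dots> = (\<Sum>x\<in>{x\<in>{x. poly p x = 0}. x \<in> ball c r}. of_nat (order x p))"
    by (rule sum.inter_filter[OF poly_roots_finite[OF assms(1)], symmetric])
  also have "{x\<in>{x. poly p x = 0}. x \<in> ball c r} = {x\<in>ball c r. poly p x = 0}"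
    by blast
  finally show ?thesis by (simp add: zeros_in_def)
qed

lemma zeros_in_ball_Rouche:
  fixes p q :: "complex poly"
  assumes "r > 0"
    and dominated: "\<forall>x. dist c x = r \<longrightarrow> cmod (poly q x) < cmod (poly p x)"
  shows "zeros_in (p + q) (ball c r) = zeros_in p (ball c r)"
proof -
  have circle: "poly p x \<noteq> 0 \<and> poly (p + q) x \<noteq> 0" if "dist c x = r" for x
    using dominated that by (auto simp: add_eq_0_iff2)
  have "dist c (c + of_real r) = r" using assms(1) by (simp add: dist_norm)
  from circle[OF this] have "p \<noteq> 0" "p + q \<noteq> 0" by (metis poly_0)+
  have "(\<Sum>x\<in>{x\<in>UNIV. poly p x + poly q x = 0}.
            winding_number (circlepath c r) x * of_int (zorder (\<lambda>x. poly p x + poly q x) x))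
      = (\<Sum>x\<in>{x\<in>UNIV. poly p x = 0}.
            winding_number (circlepath c r) x * of_int (zorder (poly p) x))"
    using poly_roots_finite[OF \<open>p + q \<noteq> 0\<close>] poly_roots_finite[OF \<open>p \<noteq> 0\<close>] assms
    by (intro Rouche_theorem) (auto intro: holomorphic_intros simp: dist_norm norm_minus_commute)
  then have "of_nat (zeros_in (p + q) (ball c r)) = (of_nat (zeros_in p (ball c r)) :: complex)"
    using sum_winding_number_zorder_circlepath_poly[OF \<open>p + q \<noteq> 0\<close> assms(1)]
      sum_winding_number_zorder_circlepath_poly[OF \<open>p \<noteq> 0\<close> assms(1)] circle
    by (simp add: poly_add[abs_def])
  then show ?thesis by (simp only: of_nat_eq_iff)
qed

lemma pderiv_prod_linear_dominates:
  fixes S :: "complex set" and A :: "'a set" and w :: "'a \<Rightarrow> complex" and R :: "complex poly"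
  defines "Q \<equiv> \<Prod>a\<in>A. [:- w a, 1:]"
  assumes S: "convex S" "bounded S" "diameter S \<le> 1" "c \<in> S"
    and A: "finite A" "A \<noteq> {}" "\<forall>a\<in>A. w a \<in> S"
    and R: "poly R x \<noteq> 0" "cmod (poly (pderiv R) x) \<le> real (card A) / 5 * cmod (poly R x)"
    and x: "dist c x \<le> 2" "(3 - sqrt 5) / 2 < infdist x S"
  shows "cmod (poly Q x * poly (pderiv R) x) < cmod (poly (pderiv Q) x * poly R x)"
proof -
  define d where "d = infdist x S"
  have "d \<le> 2" using infdist_le[OF S(4), of x] x(1) by (simp add: d_def dist_commute)
  then have "d < (3 + sqrt 5) / 2"
    by (rule le_less_trans) simp
  with x(2) have "(d + 1)^2 < 5 * d"
    unfolding d_def by (rule add_one_squared_less_five_times)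
  moreover have "0 < d"
    using x(2) unfolding d_def by (rule less_trans[rotated]) (simp add: real_less_lsqrt)
  ultimately have "1 / 5 < d / (d + 1)^2" by (simp add: field_simps)
  then have "real (card A) * (1 / 5) < real (card A) * (d / (d + 1)^2)"
    using A(1,2) by (intro mult_strict_left_mono) (simp_all add: card_gt_0_iff)
  then have "real (card A) / 5 < real (card A) * (d / (d + 1)^2)" by simp
  also have "\<dots> \<le> cmod (\<Sum>a\<in>A. 1 / (x - w a))"
    unfolding d_def using \<open>0 < d\<close> S A by (intro norm_sum_inverse_ge_convex) (auto simp: d_def)
  finally have sum_large: "real (card A) / 5 < cmod (\<Sum>a\<in>A. 1 / (x - w a))" .
  have "\<forall>a\<in>A. x \<noteq> w a" using A(3) \<open>0 < d\<close> by (auto simp: d_def)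
  then have Q': "poly (pderiv Q) x = poly Q x * (\<Sum>a\<in>A. 1 / (x - w a))" "poly Q x \<noteq> 0"
    using poly_pderiv_prod_linear[OF A(1)] A(1) by (auto simp: Q_def poly_prod)
  have "cmod (poly Q x * poly (pderiv R) x)
      \<le> cmod (poly Q x) * (real (card A) / 5 * cmod (poly R x))"
    unfolding norm_mult using R(2) by (rule mult_left_mono) simp
  also have "\<dots> < cmod (poly Q x) * (cmod (\<Sum>a\<in>A. 1 / (x - w a)) * cmod (poly R x))"
    using sum_large Q'(2) R(1) by simp
  also have "\<dots> = cmod (poly (pderiv Q) x * poly R x)"
    by (simp add: Q'(1) norm_mult)
  finally show ?thesis .
qed

lemma zeros_in_pderiv_cluster_ge:
  fixes S :: "complex set" and A :: "'a set" and w :: "'a \<Rightarrow> complex" and R :: "complex poly"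
  defines "Q \<equiv> \<Prod>a\<in>A. [:- w a, 1:]"
  assumes S: "convex S" "bounded S" "diameter S \<le> 1" "c \<in> S"
    and A: "finite A" "A \<noteq> {}" "\<forall>a\<in>A. w a \<in> S"
    and R: "\<forall>x\<in>cball c 2. poly R x \<noteq> 0 \<and>
              cmod (poly (pderiv R) x) \<le> real (card A) / 5 * cmod (poly R x)"
    and \<epsilon>: "(3 - sqrt 5) / 2 < \<epsilon>"
  shows "card A - 1 \<le> zeros_in (pderiv (Q * R)) (eps_nbhd S \<epsilon>)"
proof -
  have dominated: "cmod (poly (Q * pderiv R) x) < cmod (poly (pderiv Q * R) x)"
    if "dist c x \<le> 2" "(3 - sqrt 5) / 2 < infdist x S" for x
    using pderiv_prod_linear_dominates[OF S A] R that by (simp add: Q_def)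
  have circle: "(3 - sqrt 5) / 2 < infdist x S" if "dist c x = 2" for x
  proof (rule less_le_trans)
    show "1 \<le> infdist x S"
      using dist_le_infdist_plus_diameter[OF S(4,2), of x] S(3) that by (simp add: dist_commute)
  qed simp
  have P': "pderiv (Q * R) = pderiv Q * R + Q * pderiv R"
    by (simp add: pderiv_mult)
  have "pderiv (Q * R) \<noteq> 0"
  proof
    assume "pderiv (Q * R) = 0"
    then have "poly (pderiv Q * R) (c + 2) = - poly (Q * pderiv R) (c + 2)"
      unfolding P' by (simp only: add_eq_0_iff2 poly_minus)
    with dominated[OF _ circle, of "c + 2"] show False by (simp add: dist_norm)
  qed
  have "card A - 1 = zeros_in (pderiv Q) (ball c 2)"
    using S A unfolding Q_def by (intro zeros_in_pderiv_prod_linear_ball[symmetric]) auto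
  also have "\<dots> = zeros_in (pderiv Q * R) (ball c 2)"
    using R by (intro zeros_in_mult_nonvanishing[symmetric]) auto
  also have "\<dots> = zeros_in (pderiv (Q * R)) (ball c 2)"
    unfolding P' using dominated circle
    by (intro zeros_in_ball_Rouche[symmetric]) auto
  also have "\<dots> \<le> zeros_in (pderiv (Q * R)) (eps_nbhd S \<epsilon>)"
  proof (rule zeros_in_mono[OF \<open>pderiv (Q * R) \<noteq> 0\<close>], safe)
    fix x assume x: "x \<in> ball c 2" "poly (pderiv (Q * R)) x = 0"
    show "x \<in> eps_nbhd S \<epsilon>"
    proof (rule ccontr)
      assume "x \<notin> eps_nbhd S \<epsilon>"
      then have "(3 - sqrt 5) / 2 < infdist x S"
        using \<epsilon> by (simp add: eps_nbhd_def)
      then have "cmod (poly (Q * pderiv R) x) < cmod (poly (pderiv Q * R) x)"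
        using dominated x(1) by simp
      moreover have "poly (pderiv Q * R) x = - poly (Q * pderiv R) x"
        using x(2) unfolding P' by (simp only: poly_add add_eq_0_iff2)
      ultimately show False by simp
    qed
  qed
  finally show ?thesis .
qed

lemma Pn_split:
  assumes "i < k"
  shows "Pn k n z
           = (\<Prod>m<n. [:- z i m, 1:]) * (\<Prod>b\<in>({..<k} - {i}) \<times> {..<n}. [:- case_prod z b, 1:])"
proof -
  have "Pn k n z = (\<Prod>m<n. [:- z i m, 1:]) * (\<Prod>j\<in>{..<k} - {i}. \<Prod>m<n. [:- z j m, 1:])"
    unfolding Pn_def using assms by (simp add: prod.remove[of "{..<k}" i])
  then show ?thesis
    by (simp add: prod.cartesian_product split_beta)
qed

lemma zeros_in_pderiv_Pn_ge:
  fixes S :: "nat \<Rightarrow> complex set" and z :: "nat \<Rightarrow> nat \<Rightarrow> complex"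
  assumes S: "\<forall>j<k. bounded (S j) \<and> convex (S j) \<and> diameter (S j) \<le> 1"
    and apart: "\<forall>i<k. \<forall>j<k. i \<noteq> j \<longrightarrow> setdist (S i) (S j) \<ge> 5 * real k"
    and z: "\<forall>j<k. \<forall>m<n. z j m \<in> S j" and "n \<ge> 1" "i < k"
    and \<epsilon>: "(3 - sqrt 5) / 2 < \<epsilon>"
  shows "n - 1 \<le> zeros_in (pderiv (Pn k n z)) (eps_nbhd (S i) \<epsilon>)"
proof -
  define B where "B = ({..<k} - {i}) \<times> {..<n}"
  define R where "R = (\<Prod>b\<in>B. [:- case_prod z b, 1:])"
  define c where "c = z i 0"
  have "c \<in> S i" using z \<open>n \<ge> 1\<close> \<open>i < k\<close> by (simp add: c_def)
  have "0 < 5 * real k - 2" using \<open>i < k\<close> by simp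
  have far: "5 * real k - 2 \<le> dist x (z j m)" if "x \<in> cball c 2" "(j, m) \<in> B" for x j m
  proof -
    have "5 * real k \<le> setdist (S i) (S j)"
      using apart that(2) \<open>i < k\<close> by (auto simp: B_def)
    also have "\<dots> \<le> dist c (z j m)"
      using \<open>c \<in> S i\<close> z that(2) by (intro setdist_le_dist) (auto simp: B_def)
    also have "\<dots> \<le> dist c x + dist x (z j m)" by (rule dist_triangle)
    finally show ?thesis using that(1) by simp
  qed
  have "card B = (k - 1) * n"
    using \<open>i < k\<close> by (simp add: B_def card_cartesian_product)
  then have "real (card B) * 5 \<le> real n * (5 * real k - 2)"
    using \<open>i < k\<close> by (simp add: of_nat_diff algebra_simps)
  then have card_B: "real (card B) / (5 * real k - 2) \<le> real n / 5"
    using \<open>0 < 5 * real k - 2\<close> by (simp add: field_simps)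
  have "cmod (poly (pderiv R) x) \<le> real n / 5 * cmod (poly R x)" if "x \<in> cball c 2" for x
  proof -
    have "cmod (poly (pderiv R) x) \<le> real (card B) / (5 * real k - 2) * cmod (poly R x)"
      unfolding R_def using far[OF that] \<open>0 < 5 * real k - 2\<close>
      by (intro norm_poly_pderiv_prod_linear_le) (auto simp: B_def)
    also have "\<dots> \<le> real n / 5 * cmod (poly R x)"
      using card_B by (rule mult_right_mono) simp
    finally show ?thesis .
  qed
  moreover have "poly R x \<noteq> 0" if "x \<in> cball c 2" for x
  proof -
    have "x \<noteq> case_prod z b" if "b \<in> B" for b
      using far[OF \<open>x \<in> cball c 2\<close>, of "fst b" "snd b"] that \<open>0 < 5 * real k - 2\<close>
      by (auto simp: split_beta)
    then show ?thesis by (simp add: R_def B_def poly_prod)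
  qed
  ultimately have "card {..<n} - 1
      \<le> zeros_in (pderiv ((\<Prod>m<n. [:- z i m, 1:]) * R)) (eps_nbhd (S i) \<epsilon>)"
    using S z \<open>c \<in> S i\<close> \<open>i < k\<close> \<open>n \<ge> 1\<close> \<epsilon>
    by (intro zeros_in_pderiv_cluster_ge) (auto simp: lessThan_empty_iff)
  then show ?thesis
    using Pn_split[OF \<open>i < k\<close>] by (simp add: R_def B_def)
qed

theorem mainTheorem1:
  fixes k :: nat and \<epsilon> :: real
  assumes "k \<ge> 1"
    and "\<epsilon> > (3 - sqrt 5) / 2"
  shows "\<exists>c::real. \<forall>S :: nat \<Rightarrow> complex set.
           (\<forall>j<k. bounded (S j) \<and> convex (S j) \<and> diameter (S j) \<le> 1) \<and>
           (\<forall>i<k. \<forall>j<k. i \<noteq> j \<longrightarrow> S i \<inter> S j = {} \<and> setdist (S i) (S j) \<ge> 5 * real k)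
           \<longrightarrow> (\<forall>n::nat. \<forall>z :: nat \<Rightarrow> nat \<Rightarrow> complex. n \<ge> 1 \<longrightarrow>
                 (\<forall>j<k. \<forall>i<n. z j i \<in> S j) \<longrightarrow>
                 (\<forall>i<k. real (zeros_in (pderiv (Pn k n z)) (eps_nbhd (S i) \<epsilon>)) \<ge> real n - c))"
proof (intro exI[of _ 1] allI impI)
  fix S :: "nat \<Rightarrow> complex set" and n i :: nat and z :: "nat \<Rightarrow> nat \<Rightarrow> complex"
  assume "(\<forall>j<k. bounded (S j) \<and> convex (S j) \<and> diameter (S j) \<le> 1) \<and>
      (\<forall>i<k. \<forall>j<k. i \<noteq> j \<longrightarrow> S i \<inter> S j = {} \<and> setdist (S i) (S j) \<ge> 5 * real k)"
    and "n \<ge> 1" "\<forall>j<k. \<forall>i<n. z j i \<in> S j" "i < k"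
  then have "n - 1 \<le> zeros_in (pderiv (Pn k n z)) (eps_nbhd (S i) \<epsilon>)"
    using assms(2) by (intro zeros_in_pderiv_Pn_ge) auto
  then show "real n - 1 \<le> real (zeros_in (pderiv (Pn k n z)) (eps_nbhd (S i) \<epsilon>))"
    by linarith
qed

end
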